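(* Let $\mathbb{F}$ be a finite field and $n\ge2$. The isolated subsemigroups of $M(n,\mathbb{F})$ are exactly: $M(n,\mathbb{F})$, $\mathrm{GL}(n,\mathbb{F})$, $I_{n-1}$, and all semigroups $S(\mathcal{A},\mathcal{B})=\{A\in M(n,\mathbb{F}) : \mathrm{Im}(A)\in\mathcal{A},\ \ker(A)\in\mathcal{B}\}$, where $\mathcal{A}$ is a nonempty set of $(n-1)$-dimensional subspaces of $\mathbb{F}^n$ and $\mathcal{B}$ is a nonempty set of $1$-dimensional subspaces of $\mathbb{F}^n$ such that $V_1\not\subseteq V_2$ for every $V_1\in\mathcal{B}$ and every $V_2\in\mathcal{A}$.
   Context: $M(n,\mathbb{F})$ is the semigroup of $n\times n$ matrices over $\mathbb{F}$ under multiplication, identified with linear operators on $\mathbb{F}^n$; $\mathrm{GL}(n,\mathbb{F})$ is its group of units; $I_{n-1}$ is the set of all matrices of rank at most $n-1$. A (nonempty) subsemigroup $T$ of a semigroup $S$ is isolated if for all $x\in S$ and positive integers $m$, $x^m\in T$ implies $x\in T$. *)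

theory Defs
  imports "HOL-Analysis.Analysis"
begin

primrec mpow :: "'a::semiring_1^'n^'n \<Rightarrow> nat \<Rightarrow> 'a^'n^'n" where
  "mpow A 0 = mat 1"
| "mpow A (Suc m) = A ** mpow A m"

definition subsemigroup_mat :: "('a::semiring_1^'n^'n) set \<Rightarrow> bool" where
  "subsemigroup_mat T \<longleftrightarrow> T \<noteq> {} \<and> (\<forall>A\<in>T. \<forall>B\<in>T. A ** B \<in> T)"

definition isolated_subsemigroup :: "('a::semiring_1^'n^'n) set \<Rightarrow> bool" where
  "isolated_subsemigroup T \<longleftrightarrow> subsemigroup_mat T \<and>
     (\<forall>X m. 0 < m \<longrightarrow> mpow X m \<in> T \<longrightarrow> X \<in> T)"

definition mat_image :: "'a::field^'n^'n \<Rightarrow> ('a^'n) set" where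
  "mat_image A = range (\<lambda>x. A *v x)"

definition mat_kernel :: "'a::field^'n^'n \<Rightarrow> ('a^'n) set" where
  "mat_kernel A = {x. A *v x = 0}"

definition S_sets :: "('a::field^'n) set set \<Rightarrow> ('a^'n) set set \<Rightarrow> ('a^'n^'n) set" where
  "S_sets \<A> \<B> = {A. mat_image A \<in> \<A> \<and> mat_kernel A \<in> \<B>}"

end

theory Submission
  imports Defs
begin

(* Isolated subsemigroups are closed under products and square roots, and over a finite field
   some power of every matrix is idempotent, so an isolated T is governed by the idempotents it
   contains. A nonzero idempotent E splits as E = R + u \<phi>^T with R (the residual) an idempotent
   of rank one less. Rank-one perturbations of E and R built from u, \<phi> and kernel vectors of E
   have squares R or E, or product E; hence R \<in> T implies E \<in> T, and conversely E \<in> T implies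
   R \<in> T when T contains the identity or ker E has dimension at least 2. Descending along the
   rank, T is UNIV or GL(n) if it contains the identity, and otherwise T = I_{n-1} unless every
   element of T has rank n - 1. In that last case ker (X Y) = ker Y for X, Y \<in> T, which forces
   ker X \<inter> im Y = 0; so any X with im X = im A and ker X = ker B for some A, B \<in> T shares an
   idempotent power with A B, and T = S(im T, ker T). *)

section \<open>Linear algebra of square matrices\<close>

lemma scalar_product_add_right [simp]:
  "scalar_product p (x + y) = scalar_product p x + scalar_product p (y :: 'a::field^'n)"
  by (simp add: scalar_product_def distrib_left sum.distrib)

lemma scalar_product_diff_right [simp]:
  "scalar_product p (x - y) = scalar_product p x - scalar_product p (y :: 'a::field^'n)"
  by (simp add: scalar_product_def right_diff_distrib sum_subtractf)

lemma scalar_product_scale_right [simp]: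
  "scalar_product p (c *s x) = c * scalar_product p (x :: 'a::field^'n)"
  by (simp add: scalar_product_def sum_distrib_left algebra_simps)

lemma scalar_product_zero_right [simp]: "scalar_product p (0 :: 'a::field^'n) = 0"
  by (simp add: scalar_product_def)

lemma scalar_product_zero_left [simp]: "scalar_product 0 (x :: 'a::field^'n) = 0"
  by (simp add: scalar_product_def)

lemma scalar_product_vector_matrix_mult [simp]:
  "scalar_product (p v* A) x = scalar_product p (A *v (x :: 'a::field^'n))"
  by (simp add: scalar_product_def vector_matrix_mult_def matrix_vector_mult_def
      sum_distrib_left sum_distrib_right algebra_simps) (rule sum.swap)

definition outer_prod :: "'a::field^'n \<Rightarrow> 'a^'n \<Rightarrow> 'a^'n^'n" where
  "outer_prod u c = (\<chi> i j. u $ i * c $ j)"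

lemma outer_prod_mult_vector [simp]: "outer_prod u c *v x = scalar_product c x *s u"
  by (simp add: outer_prod_def scalar_product_def matrix_vector_mult_def vec_eq_iff
      sum_distrib_left algebra_simps)

declare matrix_vector_right_distrib [simp] matrix_vector_mult_diff_distrib [simp]
  matrix_vector_mult_add_rdistrib [simp] matrix_vector_mult_diff_rdistrib [simp]
  vector_sadd_rdistrib [simp] vector_sub_rdistrib [simp] vector_smult_assoc [simp]
  vec.scale [simp] matrix_vector_mul_assoc [symmetric, simp]

lemma dual_functional_exists:
  fixes B :: "('a::field^'n) set"
  assumes "vec.independent B" "b \<in> B"
  obtains q where "scalar_product q b = 1" "\<And>c. c \<in> B \<Longrightarrow> c \<noteq> b \<Longrightarrow> scalar_product q c = 0"
proof -
  fix i :: 'n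
  obtain g where g: "Vector_Spaces.linear (*s) (*s) g" "\<forall>c\<in>B. g c = (if c = b then axis i 1 else 0)"
    using vec.linear_independent_extend[OF assms(1), of "\<lambda>c. if c = b then axis i 1 else 0"] by blast
  have "scalar_product (matrix g $ i) x = g x $ i" for x
    by (subst matrix_works[OF g(1), symmetric]) (simp add: scalar_product_def matrix_vector_mult_def)
  with g(2) assms(2) show thesis
    by (intro that[of "matrix g $ i"]) auto
qed

lemma nonzero_dual_functional_exists:
  fixes v :: "'a::field^'n"
  assumes "v \<noteq> 0"
  obtains q where "scalar_product q v = 1"
  using dual_functional_exists[of "{v}" v] assms by auto

lemma dual_pair_exists:
  fixes V :: "('a::field^'n) set"
  assumes "2 \<le> vec.dim V"
  obtains w w' q q' where "w \<in> V" "w' \<in> V"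
    "scalar_product q w = 1" "scalar_product q w' = 0"
    "scalar_product q' w = 0" "scalar_product q' w' = 1"
proof -
  obtain B where B: "B \<subseteq> V" "vec.independent B" "card B = vec.dim V"
    by (metis vec.basis_exists)
  then have "\<not> card B \<le> 1"
    using assms by simp
  then obtain w w' where w: "w \<in> B" "w' \<in> B" "w \<noteq> w'"
    using card_le_Suc0_iff_eq[OF vec.finiteI_independent[OF B(2)]] by auto
  obtain q where "scalar_product q w = 1" "scalar_product q w' = 0"
    using dual_functional_exists[OF B(2) w(1)] w by metis
  moreover obtain q' where "scalar_product q' w' = 1" "scalar_product q' w = 0"
    using dual_functional_exists[OF B(2) w(2)] w by metis
  ultimately show thesis
    using that B(1) w by blast
qed

lemma subspace_scalar_product_kernel: "vec.subspace {x :: 'a::field^'n. scalar_product q x = 0}"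
  unfolding vec.subspace_def by simp

lemma separating_functional_exists:
  fixes W :: "('a::field^'n) set"
  assumes "vec.subspace W" "w \<notin> W"
  obtains q where "scalar_product q w = 1" "W \<subseteq> {x. scalar_product q x = 0}"
proof -
  obtain B where B: "B \<subseteq> W" "vec.independent B" "W \<subseteq> vec.span B"
    by (metis vec.basis_exists)
  have span_B: "vec.span B = W"
    using B assms(1) vec.span_minimal by blast
  have "vec.independent (insert w B)"
    using assms(2) span_B B(2) by (intro vec.independent_insertI) auto
  then obtain q where q: "scalar_product q w = 1"
    and "\<And>c. c \<in> insert w B \<Longrightarrow> c \<noteq> w \<Longrightarrow> scalar_product q c = 0"
    using dual_functional_exists[of "insert w B" w] by blast
  then have "B \<subseteq> {x. scalar_product q x = 0}"
    using assms(2) B(1) by blast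
  then have "W \<subseteq> {x. scalar_product q x = 0}"
    using vec.span_minimal[OF _ subspace_scalar_product_kernel] span_B by blast
  with q show thesis ..
qed

lemma dim_pos_of_nonzero_mem:
  fixes S :: "('a::field^'n) set"
  shows "x \<in> S \<Longrightarrow> x \<noteq> 0 \<Longrightarrow> 0 < vec.dim S"
  by (metis gr0I singletonD subsetD vec.dim_eq_0)

lemma Int_eq_zero_of_dim_eq_one:
  fixes V W :: "('a::field^'n) set"
  assumes "vec.subspace V" "vec.subspace W" "vec.dim V = 1" "\<not> V \<subseteq> W"
  shows "V \<inter> W = {0}"
proof -
  have "vec.dim (V \<inter> W) < vec.dim V"
    using assms vec.subspace_dim_equal[of "V \<inter> W" V] vec.dim_subset[of "V \<inter> W" V]
      vec.subspace_inter by fastforce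
  then have "V \<inter> W \<subseteq> {0}"
    using assms(3) by simp
  then show ?thesis
    using assms(1,2) vec.subspace_0 by blast
qed

lemma subspace_mat_kernel: "vec.subspace (mat_kernel A)"
  unfolding mat_kernel_def by (rule vec.subspace_kernel)

lemma subspace_mat_image: "vec.subspace (mat_image A)"
  unfolding mat_image_def by (rule vec.subspace_image) (rule vec.subspace_UNIV)

lemma dim_mat_kernel_add_dim_mat_image:
  fixes A :: "'a::field^'n^'n"
  shows "vec.dim (mat_kernel A) + vec.dim (mat_image A) = CARD('n)"
proof -
  let ?K = "mat_kernel A"
  obtain g where g: "Vector_Spaces.linear (*s) (*s) g" "\<forall>v\<in>mat_image A. A *v g v = v"
    using vec.linear_exists_right_inverse_on[OF _ vec.subspace_UNIV, of "(*v) A"]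
    by (auto simp: mat_image_def)
  let ?W = "g ` mat_image A"
  interpret g: Vector_Spaces.linear "(*s)" "(*s)" g by (rule g(1))
  have "inj_on g (mat_image A)"
    by (metis g(2) inj_onI)
  then have dim_W: "vec.dim ?W = vec.dim (mat_image A)"
    using vec.dim_image_eq[OF g(1)] vec.span_eq_iff subspace_mat_image by metis
  have sum_UNIV: "{x + y |x y. x \<in> ?K \<and> y \<in> ?W} = UNIV"
  proof -
    have "x = (x - g (A *v x)) + g (A *v x)" for x by simp
    moreover have "x - g (A *v x) \<in> ?K" "g (A *v x) \<in> ?W" for x
      using g(2) by (auto simp: mat_kernel_def mat_image_def)
    ultimately show ?thesis by blast
  qed
  have "?K \<inter> ?W \<subseteq> {0}"
    using g(2) by (auto simp: mat_kernel_def)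
  then have dim_Int: "vec.dim (?K \<inter> ?W) = 0" by simp
  have "vec.subspace ?W"
    by (rule g.subspace_image[OF subspace_mat_image])
  then have "vec.dim (UNIV :: ('a^'n) set) + vec.dim (?K \<inter> ?W) = vec.dim ?K + vec.dim ?W"
    using vec.dim_sums_Int[OF subspace_mat_kernel, of ?W A] unfolding sum_UNIV by blast
  then show ?thesis
    using dim_Int dim_W vec_dim_card[where 'a='a and 'n='n] by linarith
qed

lemma invertible_iff_mat_image: "invertible A \<longleftrightarrow> mat_image A = UNIV"
  unfolding invertible_right_inverse matrix_right_invertible_surjective mat_image_def by simp

lemma invertible_iff_mat_kernel: "invertible A \<longleftrightarrow> mat_kernel A = {0}"
  unfolding invertible_left_inverse matrix_left_invertible_ker mat_kernel_def by auto

lemma invertible_iff_dim_mat_image: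
  "invertible (A :: 'a::field^'n^'n) \<longleftrightarrow> vec.dim (mat_image A) = CARD('n)"
  using vec.subspace_dim_equal[OF subspace_mat_image vec.subspace_UNIV, of A]
  by (auto simp: invertible_iff_mat_image card_cart_basis)

lemma singular_mat_kernel_nonzero:
  fixes A :: "'a::field^'n^'n"
  assumes "\<not> invertible A"
  obtains w where "w \<noteq> 0" "A *v w = 0"
  using assms that unfolding invertible_left_inverse matrix_left_invertible_ker by auto

lemma rank_le_card_minus_one_iff:
  fixes A :: "'a::field^'n^'n"
  shows "rank A \<le> CARD('n) - 1 \<longleftrightarrow> \<not> invertible A"
proof -
  have "invertible A \<longleftrightarrow> vec.span (rows A) = UNIV"
    by (simp add: invertible_left_inverse matrix_left_invertible_span_rows_gen)
  also have "\<dots> \<longleftrightarrow> rank A = CARD('n)"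
    unfolding row_rank_def_gen
    using vec.dim_eq_full[of "rows A"] by (simp add: vec.dimension_def card_cart_basis)
  finally have "invertible A \<longleftrightarrow> rank A = CARD('n)" .
  moreover have "rank A \<le> CARD('n)"
    unfolding row_rank_def_gen by (rule dim_subset_UNIV_cart_gen)
  ultimately show ?thesis
    using zero_less_card_finite[where 'a='n] by linarith
qed

lemma invertible_mult_iff:
  fixes A B :: "'a::field^'n^'n"
  shows "invertible (A ** B) \<longleftrightarrow> invertible A \<and> invertible B"
  by (simp add: invertible_det_nz det_mul)

lemma not_invertible_zero: "\<not> invertible (0 :: 'a::field^'n^'n)"
  using det_0 by (simp add: invertible_det_nz)

lemma mat_image_mult_subset: "mat_image ((A :: 'a::field^'n^'n) ** B) \<subseteq> mat_image A"
  by (auto simp: mat_image_def)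

lemma mat_kernel_subset_mult: "mat_kernel (B :: 'a::field^'n^'n) \<subseteq> mat_kernel (A ** B)"
  by (auto simp: mat_kernel_def)

lemma mat_kernel_mult_eq:
  fixes A B :: "'a::field^'n^'n"
  assumes "mat_kernel A \<inter> mat_image B = {0}"
  shows "mat_kernel (A ** B) = mat_kernel B"
proof
  show "mat_kernel (A ** B) \<subseteq> mat_kernel B"
  proof
    fix x assume "x \<in> mat_kernel (A ** B)"
    then have "B *v x \<in> mat_kernel A \<inter> mat_image B"
      by (simp add: mat_kernel_def mat_image_def)
    then have "B *v x = 0"
      using assms by blast
    then show "x \<in> mat_kernel B"
      by (simp add: mat_kernel_def)
  qed
qed (rule mat_kernel_subset_mult)

lemma idempotent_eqI:
  fixes P Q :: "'a::field^'n^'n"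
  assumes "P ** P = P" "Q ** Q = Q"
    and "mat_image P = mat_image Q" "mat_kernel P = mat_kernel Q"
  shows "P = Q"
proof (rule matrix_eq[THEN iffD2], intro allI)
  fix x
  have idem: "P *v (P *v y) = P *v y" "Q *v (Q *v y) = Q *v y" for y
    using assms(1,2) by (metis matrix_vector_mul_assoc)+
  have "P *v x \<in> mat_image Q"
    using assms(3) by (auto simp: mat_image_def)
  then have Q_fixes: "Q *v (P *v x) = P *v x"
    using idem by (auto simp: mat_image_def)
  have "x - P *v x \<in> mat_kernel P"
    using idem by (simp add: mat_kernel_def)
  then have "x - P *v x \<in> mat_kernel Q"
    using assms(4) by simp
  then show "P *v x = Q *v x"
    using Q_fixes by (simp add: mat_kernel_def)
qed

lemma mat_kernel_image_exists:
  fixes V W :: "('a::field^'n) set"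
  assumes V: "vec.subspace V" "vec.dim V = 1"
    and W: "vec.subspace W" "vec.dim W = CARD('n) - 1"
    and "\<not> V \<subseteq> W"
  obtains P where "mat_kernel P = V" "mat_image P = W"
proof -
  obtain w where w: "w \<in> V" "w \<notin> W"
    using assms(5) by blast
  obtain q where q: "scalar_product q w = 1" "W \<subseteq> {x. scalar_product q x = 0}"
    using separating_functional_exists[OF W(1) w(2)] .
  define P where "P = mat 1 - outer_prod w q"
  have P: "P *v y = y - scalar_product q y *s w" for y
    by (simp add: P_def)
  have "mat_kernel P \<subseteq> V"
  proof
    fix y assume "y \<in> mat_kernel P"
    then have "y = scalar_product q y *s w"
      using P by (simp add: mat_kernel_def)
    then show "y \<in> V"
      using V(1) w(1) vec.subspace_scale by metis
  qed
  moreover have "w \<in> mat_kernel P"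
    using P q(1) by (simp add: mat_kernel_def)
  then have "0 < vec.dim (mat_kernel P)"
    using w(2) W(1) vec.subspace_0 dim_pos_of_nonzero_mem by blast
  then have "vec.dim V \<le> vec.dim (mat_kernel P)"
    using V(2) by simp
  ultimately have kernel: "mat_kernel P = V"
    by (rule vec.subspace_dim_equal[OF subspace_mat_kernel V(1)])
  have "W \<subseteq> mat_image P"
  proof
    fix y assume "y \<in> W"
    then have "y = P *v y"
      using P q(2) by auto
    then show "y \<in> mat_image P"
      unfolding mat_image_def by (metis rangeI)
  qed
  moreover have "vec.dim (mat_image P) \<le> vec.dim W"
    using dim_mat_kernel_add_dim_mat_image[of P] kernel V(2) W(2) by simp
  ultimately have "W = mat_image P"
    by (rule vec.subspace_dim_equal[OF W(1) subspace_mat_image])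
  with kernel show thesis
    using that by blast
qed

section \<open>Matrix powers\<close>

lemma mpow_add: "mpow A (m + k) = mpow A m ** mpow A k"
  by (induction m) (simp_all add: matrix_mul_assoc)

lemma mpow_Suc_right: "mpow A (Suc m) = mpow A m ** A"
  using mpow_add[of A m 1] by simp

lemma det_mpow: "det (mpow (A :: 'a::comm_ring_1^'n^'n) m) = det A ^ m"
  by (induction m) (simp_all add: det_mul)

lemma invertible_mpow_iff:
  "0 < m \<Longrightarrow> invertible (mpow (A :: 'a::field^'n^'n) m) \<longleftrightarrow> invertible A"
  by (simp add: invertible_det_nz det_mpow)

lemma mat_image_mpow_subset: "0 < m \<Longrightarrow> mat_image (mpow (A :: 'a::field^'n^'n) m) \<subseteq> mat_image A"
  by (cases m) (auto simp: mat_image_def)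

lemma mat_kernel_subset_mpow: "0 < m \<Longrightarrow> mat_kernel (A :: 'a::field^'n^'n) \<subseteq> mat_kernel (mpow A m)"
  by (cases m) (auto simp: mat_kernel_def mpow_Suc_right simp del: mpow.simps)

lemma mat_kernel_mpow_eq:
  fixes A :: "'a::field^'n^'n"
  assumes "mat_kernel A \<inter> mat_image A = {0}" "0 < m"
  shows "mat_kernel (mpow A m) = mat_kernel A"
  using \<open>0 < m\<close>
proof (induction m rule: nat_induct_non_zero)
  case (Suc m)
  have "mat_kernel (mpow A (Suc m)) = mat_kernel (mpow A m ** A)"
    by (simp only: mpow_Suc_right)
  also have "\<dots> = mat_kernel A"
    using Suc.IH assms(1) by (simp only: mat_kernel_mult_eq)
  finally show ?case .
qed simp

lemma mat_image_mpow_eq: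
  fixes A :: "'a::field^'n^'n"
  assumes "mat_kernel A \<inter> mat_image A = {0}" "0 < m"
  shows "mat_image (mpow A m) = mat_image A"
  using dim_mat_kernel_add_dim_mat_image[of A] dim_mat_kernel_add_dim_mat_image[of "mpow A m"]
    mat_kernel_mpow_eq[OF assms]
  by (intro vec.subspace_dim_equal subspace_mat_image mat_image_mpow_subset[OF assms(2)]) simp

lemma mpow_periodic:
  assumes "mpow A (i + p) = mpow A i" "i \<le> s"
  shows "mpow A (s + c * p) = mpow A s"
proof (induction c)
  case (Suc c)
  have "mpow A (s + Suc c * p) = mpow A (s + c * p - i) ** mpow A (i + p)"
    using assms(2) by (simp add: mpow_add[symmetric] algebra_simps)
  also have "\<dots> = mpow A (s + c * p)"
    using assms by (simp add: mpow_add[symmetric])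
  finally show ?case
    using Suc.IH by simp
qed simp

lemma idempotent_mpow_exists:
  fixes A :: "'a::{finite,semiring_1}^'n^'n"
  obtains k where "0 < k" "mpow A k ** mpow A k = mpow A k"
proof -
  have "\<not> inj (mpow A)"
    using finite_imageD[of "mpow A" UNIV] infinite_UNIV_nat by auto
  then obtain i j where "i < j" "mpow A i = mpow A j"
    unfolding inj_def by (metis linorder_neqE_nat)
  then obtain p where p: "0 < p" "mpow A (i + p) = mpow A i"
    by (metis less_imp_add_positive)
  define k where "k = Suc i * p"
  have "i \<le> k"
    using p(1) by (simp add: k_def trans_le_add2)
  have "mpow A k ** mpow A k = mpow A (k + Suc i * p)"
    by (simp add: k_def mpow_add)
  also have "\<dots> = mpow A k"
    by (rule mpow_periodic[OF p(2) \<open>i \<le> k\<close>])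
  finally show thesis
    using p(1) by (intro that[of k]) (simp_all add: k_def)
qed

lemma invertible_mpow_eq_one:
  fixes A :: "'a::{finite,field}^'n^'n"
  assumes "invertible A"
  obtains k where "0 < k" "mpow A k = mat 1"
proof -
  obtain k where k: "0 < k" "mpow A k ** mpow A k = mpow A k"
    by (rule idempotent_mpow_exists)
  obtain B where B: "B ** mpow A k = mat 1"
    using assms invertible_mpow_iff[OF k(1)] invertible_left_inverse by blast
  have "mpow A k = (B ** mpow A k) ** mpow A k"
    using B by simp
  also have "\<dots> = B ** (mpow A k ** mpow A k)"
    by (rule matrix_mul_assoc[symmetric])
  also have "\<dots> = mat 1"
    using B k(2) by simp
  finally show thesis
    using k(1) that by blast
qed

lemma idempotent_mpow_eq:
  fixes A B :: "'a::{finite,field}^'n^'n"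
  assumes "mat_kernel A \<inter> mat_image A = {0}"
    and "mat_kernel A = mat_kernel B" "mat_image A = mat_image B"
  obtains j k where "0 < j" "0 < k" "mpow A j = mpow B k"
proof -
  obtain j where j: "0 < j" "mpow A j ** mpow A j = mpow A j"
    by (rule idempotent_mpow_exists)
  obtain k where k: "0 < k" "mpow B k ** mpow B k = mpow B k"
    by (rule idempotent_mpow_exists)
  have B: "mat_kernel B \<inter> mat_image B = {0}"
    using assms by simp
  have "mpow A j = mpow B k"
  proof (rule idempotent_eqI[OF j(2) k(2)])
    show "mat_image (mpow A j) = mat_image (mpow B k)"
      using mat_image_mpow_eq[OF assms(1) j(1)] mat_image_mpow_eq[OF B k(1)] assms(3) by simp
    show "mat_kernel (mpow A j) = mat_kernel (mpow B k)"
      using mat_kernel_mpow_eq[OF assms(1) j(1)] mat_kernel_mpow_eq[OF B k(1)] assms(2) by simp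
  qed
  with j(1) k(1) show thesis ..
qed

section \<open>Isolated subsemigroups\<close>

lemma isolated_subsemigroup_mult:
  "isolated_subsemigroup T \<Longrightarrow> A \<in> T \<Longrightarrow> B \<in> T \<Longrightarrow> A ** B \<in> T"
  unfolding isolated_subsemigroup_def subsemigroup_mat_def by blast

lemma isolated_subsemigroup_mpow_iff:
  assumes "isolated_subsemigroup T" "0 < m"
  shows "mpow A m \<in> T \<longleftrightarrow> A \<in> T"
proof
  show "A \<in> T \<Longrightarrow> mpow A m \<in> T"
    using \<open>0 < m\<close>
    by (induction m rule: nat_induct_non_zero)
      (auto intro: isolated_subsemigroup_mult[OF assms(1)])
qed (use assms in \<open>auto simp: isolated_subsemigroup_def\<close>)

lemma isolated_subsemigroup_square_root:
  assumes "isolated_subsemigroup T" "A ** A = B" "B \<in> T"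
  shows "A \<in> T"
  using isolated_subsemigroup_mpow_iff[OF assms(1), of 2 A] assms(2,3)
  by (simp add: numeral_2_eq_2)

lemma one_mem_of_invertible_mem:
  fixes A :: "'a::{finite,field}^'n^'n"
  assumes "isolated_subsemigroup T" "A \<in> T" "invertible A"
  shows "mat 1 \<in> T"
  using invertible_mpow_eq_one[OF assms(3)] isolated_subsemigroup_mpow_iff[OF assms(1)] assms(2)
  by metis

lemma invertible_mem_of_one_mem:
  fixes A :: "'a::{finite,field}^'n^'n"
  assumes "isolated_subsemigroup T" "mat 1 \<in> T" "invertible A"
  shows "A \<in> T"
  using invertible_mpow_eq_one[OF assms(3)] isolated_subsemigroup_mpow_iff[OF assms(1)] assms(2)
  by metis

lemma isolated_subsemigroup_UNIV: "isolated_subsemigroup (UNIV :: ('a::semiring_1^'n^'n) set)"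
  unfolding isolated_subsemigroup_def subsemigroup_mat_def by simp

lemma isolated_subsemigroup_invertible:
  "isolated_subsemigroup {A :: 'a::field^'n^'n. invertible A}"
  unfolding isolated_subsemigroup_def subsemigroup_mat_def
  using invertible_mult_iff invertible_mpow_iff
  by (auto intro!: exI[of _ "mat 1"] simp: invertible_det_nz)

lemma isolated_subsemigroup_singular:
  "isolated_subsemigroup {A :: 'a::field^'n^'n. \<not> invertible A}"
  unfolding isolated_subsemigroup_def subsemigroup_mat_def
  using invertible_mult_iff invertible_mpow_iff not_invertible_zero by blast

section \<open>Splitting off a rank-one idempotent\<close>

locale idempotent_split =
  fixes E :: "'a::field^'n^'n" and u \<phi> :: "'a^'n"
  assumes idempotent: "E ** E = E"
    and fixed [simp]: "E *v u = u"
    and functional_invariant: "\<phi> v* E = \<phi>"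
    and functional_fixed [simp]: "scalar_product \<phi> u = 1"
begin

definition residual :: "'a^'n^'n" where
  "residual = E - outer_prod u \<phi>"

lemma idempotent_vector [simp]: "E *v (E *v x) = E *v x"
  using idempotent by (metis matrix_vector_mul_assoc)

lemma functional_idempotent [simp]: "scalar_product \<phi> (E *v x) = scalar_product \<phi> x"
  using functional_invariant by (metis scalar_product_vector_matrix_mult)

lemma residual_mult_vector [simp]: "residual *v x = E *v x - scalar_product \<phi> x *s u"
  by (simp add: residual_def)

lemma residual_idempotent: "residual ** residual = residual"
  by (subst matrix_eq) simp

lemma dim_mat_image_residual_less: "vec.dim (mat_image residual) < vec.dim (mat_image E)"
proof -
  have "residual *v x = E *v (x - scalar_product \<phi> x *s u)" for x
    by simp
  then have "mat_image residual \<subseteq> mat_image E"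
    unfolding mat_image_def by (metis image_subsetI rangeI)
  moreover have "u \<in> mat_image E"
    unfolding mat_image_def by (metis fixed rangeI)
  moreover have "scalar_product \<phi> (residual *v x) = 0" for x
    by simp
  then have "u \<notin> mat_image residual"
    unfolding mat_image_def by (metis functional_fixed imageE zero_neq_one)
  ultimately have "mat_image residual \<subset> mat_image E"
    by blast
  then show ?thesis
    using vec.dim_psubset subspace_mat_image vec.span_eq_iff by metis
qed

lemma singular_residual: "\<not> invertible residual"
  using dim_mat_image_residual_less dim_subset_UNIV_cart_gen[of "mat_image E"]
  by (simp add: invertible_iff_dim_mat_image)

end

lemma idempotent_split_exists:
  fixes E :: "'a::field^'n^'n"
  assumes "E ** E = E" "E \<noteq> 0"
  obtains u \<phi> where "idempotent_split E u \<phi>"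
proof -
  obtain x where "E *v x \<noteq> 0"
    using assms(2) by (metis matrix_eq matrix_vector_mult_0)
  then obtain p where p: "scalar_product p (E *v x) = 1"
    by (rule nonzero_dual_functional_exists)
  have "E *v (E *v y) = E *v y" for y
    using assms(1) by (metis matrix_vector_mul_assoc)
  then have "idempotent_split E (E *v x) (p v* E)"
    using assms(1) p by unfold_locales (simp_all add: vector_matrix_mul_assoc)
  then show thesis ..
qed

locale idempotent_split_kernel = idempotent_split +
  fixes w \<psi>
  assumes kernel [simp]: "E *v w = 0"
    and kernel_functional_annihilates: "\<psi> v* E = 0"
    and kernel_functional_kernel [simp]: "scalar_product \<psi> w = 1"
begin

lemma kernel_functional_idempotent [simp]: "scalar_product \<psi> (E *v x) = 0"
  using kernel_functional_annihilates by (metis scalar_product_vector_matrix_mult scalar_product_zero_left)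

lemma functional_kernel [simp]: "scalar_product \<phi> w = 0"
  using functional_idempotent[of w] by simp

lemma kernel_functional_fixed [simp]: "scalar_product \<psi> u = 0"
  using kernel_functional_idempotent[of u] by simp

lemma residual_square_roots:
  "(residual + outer_prod w \<phi>) ** (residual + outer_prod w \<phi>) = residual"
  "(residual + outer_prod u \<psi>) ** (residual + outer_prod u \<psi>) = residual"
  "(residual + outer_prod u \<psi>) ** (residual + outer_prod w \<phi>) = E"
  by (subst matrix_eq; simp)+

text \<open>The involution \<open>swap\<close> exchanges \<open>u\<close> and \<open>w\<close> and fixes the common kernel of \<open>\<phi>\<close> and \<open>\<psi>\<close>.\<close>

definition swap where
  "swap = mat 1 - outer_prod u \<phi> - outer_prod w \<psi> + outer_prod w \<phi> + outer_prod u \<psi>"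

lemma swap_involution: "swap ** swap = mat 1"
  by (subst matrix_eq) (simp add: swap_def algebra_simps)

lemma idempotent_swap_square: "(E ** swap) ** (E ** swap) = residual"
  by (subst matrix_eq) (simp add: swap_def algebra_simps)

end

locale idempotent_split_kernel2 =
  idempotent_split_kernel E u \<phi> w \<psi> + second: idempotent_split_kernel E u \<phi> w' \<psi>'
  for E u \<phi> w \<psi> w' \<psi>' +
  assumes biorthogonal [simp]: "scalar_product \<psi> w' = 0" "scalar_product \<psi>' w = 0"
begin

lemma idempotent_square_roots:
  "(E + outer_prod w \<psi>') ** (E + outer_prod w \<psi>') = E"
  "(E + outer_prod w' \<psi>) ** (E + outer_prod w' \<psi>) = E"
  by (subst matrix_eq; simp)+

lemma residual_perturbed_square:
  "(residual + outer_prod w \<phi> + outer_prod u \<psi>) ** (residual + outer_prod w \<phi> + outer_prod u \<psi>)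
    = (E + outer_prod w \<psi>') ** (E + outer_prod w' \<psi>)"
  by (subst matrix_eq) (simp add: algebra_simps)

lemma residual_as_square:
  defines "Z \<equiv> ((E + outer_prod w' \<psi>) ** (E + outer_prod w \<psi>')) ** (residual + outer_prod w \<phi> + outer_prod u \<psi>)"
  shows "Z ** Z = residual"
  unfolding Z_def by (subst matrix_eq) (simp add: algebra_simps)

end

context idempotent_split
begin

lemma complement_annihilates: "q v* (mat 1 - E) v* E = 0"
proof -
  have "(mat 1 - E) ** E = 0"
    by (subst matrix_eq) simp
  then show ?thesis
    by (simp add: vector_matrix_mul_assoc)
qed

lemma split_kernel:
  assumes "E *v w = 0" "scalar_product q w = 1"
  shows "idempotent_split_kernel E u \<phi> w (q v* (mat 1 - E))"
  using assms complement_annihilates by unfold_locales simp_all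

lemma split_kernel2:
  assumes "E *v w = 0" "E *v w' = 0"
    and "scalar_product q w = 1" "scalar_product q w' = 0"
    and "scalar_product q' w = 0" "scalar_product q' w' = 1"
  shows "idempotent_split_kernel2 E u \<phi> w (q v* (mat 1 - E)) w' (q' v* (mat 1 - E))"
  using assms split_kernel
  by (simp add: idempotent_split_kernel2_def idempotent_split_kernel2_axioms_def)

lemma mem_of_residual_mem:
  assumes T: "isolated_subsemigroup T" and "residual \<in> T" "\<not> invertible E"
  shows "E \<in> T"
proof -
  obtain w where "w \<noteq> 0" "E *v w = 0"
    using singular_mat_kernel_nonzero[OF assms(3)] .
  moreover obtain q where "scalar_product q w = 1"
    using nonzero_dual_functional_exists[OF \<open>w \<noteq> 0\<close>] .
  ultimately interpret idempotent_split_kernel E u \<phi> w "q v* (mat 1 - E)"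
    using split_kernel by blast
  have "residual + outer_prod u (q v* (mat 1 - E)) \<in> T" "residual + outer_prod w \<phi> \<in> T"
    using isolated_subsemigroup_square_root[OF T residual_square_roots(1)]
      isolated_subsemigroup_square_root[OF T residual_square_roots(2)] assms(2) by auto
  from isolated_subsemigroup_mult[OF T this] show ?thesis
    by (simp only: residual_square_roots(3))
qed

lemma residual_mem_of_one_mem:
  assumes T: "isolated_subsemigroup T" and "E \<in> T" "mat 1 \<in> T" "\<not> invertible E"
  shows "residual \<in> T"
proof -
  obtain w where "w \<noteq> 0" "E *v w = 0"
    using singular_mat_kernel_nonzero[OF assms(4)] .
  moreover obtain q where "scalar_product q w = 1"
    using nonzero_dual_functional_exists[OF \<open>w \<noteq> 0\<close>] .
  ultimately interpret idempotent_split_kernel E u \<phi> w "q v* (mat 1 - E)"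
    using split_kernel by blast
  have "swap \<in> T"
    using isolated_subsemigroup_square_root[OF T swap_involution assms(3)] .
  then have "E ** swap \<in> T"
    using isolated_subsemigroup_mult[OF T assms(2)] by blast
  from isolated_subsemigroup_mult[OF T this this] show ?thesis
    by (simp only: idempotent_swap_square)
qed

lemma residual_mem_of_dim_kernel:
  assumes T: "isolated_subsemigroup T" and "E \<in> T" "2 \<le> vec.dim (mat_kernel E)"
  shows "residual \<in> T"
proof -
  obtain w w' q q' where w: "w \<in> mat_kernel E" "w' \<in> mat_kernel E"
    and q: "scalar_product q w = 1" "scalar_product q w' = 0"
      "scalar_product q' w = 0" "scalar_product q' w' = 1"
    by (rule dual_pair_exists[OF assms(3)])
  interpret idempotent_split_kernel2 E u \<phi> w "q v* (mat 1 - E)" w' "q' v* (mat 1 - E)"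
    using w by (intro split_kernel2 q) (simp_all add: mat_kernel_def)
  let ?Y = "E + outer_prod w (q' v* (mat 1 - E))" and ?Y' = "E + outer_prod w' (q v* (mat 1 - E))"
    and ?A = "residual + outer_prod w \<phi> + outer_prod u (q v* (mat 1 - E))"
  have Y: "?Y \<in> T" "?Y' \<in> T"
    using isolated_subsemigroup_square_root[OF T idempotent_square_roots(1) assms(2)]
      isolated_subsemigroup_square_root[OF T idempotent_square_roots(2) assms(2)] .
  then have "?A \<in> T"
    by (intro isolated_subsemigroup_square_root[OF T residual_perturbed_square]
        isolated_subsemigroup_mult[OF T])
  then have "(?Y' ** ?Y) ** ?A \<in> T"
    using Y by (intro isolated_subsemigroup_mult[OF T])
  from isolated_subsemigroup_mult[OF T this this] show ?thesis
    by (simp only: residual_as_square)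
qed

end

lemma zero_mem_of_singular_idempotent_mem:
  fixes E :: "'a::field^'n^'n"
  assumes T: "isolated_subsemigroup T"
  shows "E \<in> T \<Longrightarrow> E ** E = E \<Longrightarrow> \<not> invertible E \<Longrightarrow>
    mat 1 \<in> T \<or> vec.dim (mat_image E) + 2 \<le> CARD('n) \<Longrightarrow> 0 \<in> T"
proof (induction "vec.dim (mat_image E)" arbitrary: E rule: less_induct)
  case less
  show ?case
  proof (cases "E = 0")
    case False
    then obtain u \<phi> where "idempotent_split E u \<phi>"
      using idempotent_split_exists less.prems(2) by blast
    then interpret idempotent_split E u \<phi> .
    have "residual \<in> T"
    proof (cases "mat 1 \<in> T")
      case True
      then show ?thesis
        using residual_mem_of_one_mem[OF T less.prems(1)] less.prems(3) by blast
    next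
      case False
      then have "2 \<le> vec.dim (mat_kernel E)"
        using less.prems(4) dim_mat_kernel_add_dim_mat_image[of E] by linarith
      then show ?thesis
        by (rule residual_mem_of_dim_kernel[OF T less.prems(1)])
    qed
    then show ?thesis
      using less.hyps[OF dim_mat_image_residual_less _ residual_idempotent singular_residual]
        less.prems(4) dim_mat_image_residual_less by linarith
  qed (use less.prems in simp)
qed

lemma singular_idempotent_mem_of_zero_mem:
  fixes E :: "'a::field^'n^'n"
  assumes T: "isolated_subsemigroup T" and "0 \<in> T"
  shows "E ** E = E \<Longrightarrow> \<not> invertible E \<Longrightarrow> E \<in> T"
proof (induction "vec.dim (mat_image E)" arbitrary: E rule: less_induct)
  case less
  show ?case
  proof (cases "E = 0")
    case False
    then obtain u \<phi> where "idempotent_split E u \<phi>"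
      using idempotent_split_exists less.prems(1) by blast
    then interpret idempotent_split E u \<phi> .
    have "residual \<in> T"
      by (rule less.hyps[OF dim_mat_image_residual_less residual_idempotent singular_residual])
    then show ?thesis
      by (rule mem_of_residual_mem[OF T _ less.prems(2)])
  qed (use assms(2) in simp)
qed

lemma singular_mem_of_zero_mem:
  fixes A :: "'a::{finite,field}^'n^'n"
  assumes T: "isolated_subsemigroup T" and "0 \<in> T" "\<not> invertible A"
  shows "A \<in> T"
proof -
  obtain k where k: "0 < k" "mpow A k ** mpow A k = mpow A k"
    by (rule idempotent_mpow_exists)
  have "mpow A k \<in> T"
    using singular_idempotent_mem_of_zero_mem[OF T assms(2) k(2)] invertible_mpow_iff[OF k(1)]
      assms(3) by blast
  then show ?thesis
    using isolated_subsemigroup_mpow_iff[OF T k(1)] by blast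
qed

lemma zero_mem_of_singular_mem:
  fixes A :: "'a::{finite,field}^'n^'n"
  assumes T: "isolated_subsemigroup T" and "A \<in> T" "\<not> invertible A"
    and "mat 1 \<in> T \<or> vec.dim (mat_image A) + 2 \<le> CARD('n)"
  shows "0 \<in> T"
proof -
  obtain k where k: "0 < k" "mpow A k ** mpow A k = mpow A k"
    by (rule idempotent_mpow_exists)
  have "vec.dim (mat_image (mpow A k)) \<le> vec.dim (mat_image A)"
    using vec.dim_subset[OF mat_image_mpow_subset[OF k(1)]] .
  then show ?thesis
    using zero_mem_of_singular_idempotent_mem[OF T _ k(2)] assms(2-4) k(1)
      isolated_subsemigroup_mpow_iff[OF T k(1)] invertible_mpow_iff[OF k(1)] by fastforce
qed

section \<open>The semigroups S(\<A>, \<B>)\<close>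

definition admissible_families :: "('a::field^'n) set set \<Rightarrow> ('a^'n) set set \<Rightarrow> bool" where
  "admissible_families \<A> \<B> \<longleftrightarrow> \<A> \<noteq> {} \<and> \<B> \<noteq> {} \<and>
     (\<forall>V\<in>\<A>. vec.subspace V \<and> vec.dim V = CARD('n) - 1) \<and>
     (\<forall>V\<in>\<B>. vec.subspace V \<and> vec.dim V = 1) \<and>
     (\<forall>V1\<in>\<B>. \<forall>V2\<in>\<A>. \<not> V1 \<subseteq> V2)"

lemma corank_one_mult:
  fixes A B :: "'a::field^'n^'n"
  assumes "vec.dim (mat_kernel A) = 1" "vec.dim (mat_kernel B) = 1"
    and "\<not> mat_kernel A \<subseteq> mat_image B"
  shows "mat_kernel (A ** B) = mat_kernel B" "mat_image (A ** B) = mat_image A"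
proof -
  have "mat_kernel A \<inter> mat_image B = {0}"
    using assms by (intro Int_eq_zero_of_dim_eq_one subspace_mat_kernel subspace_mat_image)
  then show kernel: "mat_kernel (A ** B) = mat_kernel B"
    by (rule mat_kernel_mult_eq)
  have "vec.dim (mat_kernel (A ** B)) = vec.dim (mat_kernel A)"
    using kernel assms(1,2) by simp
  then have "vec.dim (mat_image A) \<le> vec.dim (mat_image (A ** B))"
    using dim_mat_kernel_add_dim_mat_image[of A] dim_mat_kernel_add_dim_mat_image[of "A ** B"]
    by linarith
  then show "mat_image (A ** B) = mat_image A"
    by (rule vec.subspace_dim_equal[OF subspace_mat_image subspace_mat_image mat_image_mult_subset])
qed

lemma corank_one_mpow:
  fixes A :: "'a::field^'n^'n"
  assumes "0 < m" "vec.dim (mat_kernel (mpow A m)) = 1"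
  shows "mat_kernel A = mat_kernel (mpow A m)" "mat_image A = mat_image (mpow A m)"
proof -
  have "\<not> invertible (mpow A m)"
    using assms(2) by (force simp: invertible_iff_mat_kernel)
  then have "\<not> invertible A"
    using invertible_mpow_iff[OF assms(1), of A] by simp
  then obtain w where "w \<noteq> 0" "A *v w = 0"
    by (rule singular_mat_kernel_nonzero)
  then have "0 < vec.dim (mat_kernel A)"
    using dim_pos_of_nonzero_mem[of w] by (simp add: mat_kernel_def)
  then have "vec.dim (mat_kernel (mpow A m)) \<le> vec.dim (mat_kernel A)"
    using assms(2) by simp
  then show kernel: "mat_kernel A = mat_kernel (mpow A m)"
    by (rule vec.subspace_dim_equal[OF subspace_mat_kernel subspace_mat_kernel
          mat_kernel_subset_mpow[OF assms(1)]])
  then have "vec.dim (mat_image A) \<le> vec.dim (mat_image (mpow A m))"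
    using dim_mat_kernel_add_dim_mat_image[of A] dim_mat_kernel_add_dim_mat_image[of "mpow A m"]
    by simp
  then show "mat_image A = mat_image (mpow A m)"
    by (intro vec.subspace_dim_equal[OF subspace_mat_image subspace_mat_image
          mat_image_mpow_subset[OF assms(1)], symmetric])
qed

lemma isolated_subsemigroup_S_sets:
  fixes \<A> \<B> :: "('a::field^'n) set set"
  assumes "admissible_families \<A> \<B>"
  shows "isolated_subsemigroup (S_sets \<A> \<B>)"
proof -
  have \<A>: "\<And>V. V \<in> \<A> \<Longrightarrow> vec.subspace V \<and> vec.dim V = CARD('n) - 1"
    and \<B>: "\<And>V. V \<in> \<B> \<Longrightarrow> vec.subspace V \<and> vec.dim V = 1"
    and \<A>\<B>: "\<And>V1 V2. V1 \<in> \<B> \<Longrightarrow> V2 \<in> \<A> \<Longrightarrow> \<not> V1 \<subseteq> V2"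
    using assms by (auto simp: admissible_families_def)
  obtain V1 V2 where "V1 \<in> \<B>" "V2 \<in> \<A>"
    using assms by (auto simp: admissible_families_def)
  then obtain P where "mat_kernel P = V1" "mat_image P = V2"
    using mat_kernel_image_exists \<A> \<B> \<A>\<B> by metis
  then have nonempty: "S_sets \<A> \<B> \<noteq> {}"
    using \<open>V1 \<in> \<B>\<close> \<open>V2 \<in> \<A>\<close> by (auto simp: S_sets_def)
  have closed: "A ** B \<in> S_sets \<A> \<B>" if "A \<in> S_sets \<A> \<B>" "B \<in> S_sets \<A> \<B>" for A B
    using that corank_one_mult[of A B] \<B> \<A>\<B> by (auto simp: S_sets_def)
  have isolated: "A \<in> S_sets \<A> \<B>" if "0 < m" "mpow A m \<in> S_sets \<A> \<B>" for A m
    using that corank_one_mpow[of m A] \<B> by (auto simp: S_sets_def)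
  show ?thesis
    unfolding isolated_subsemigroup_def subsemigroup_mat_def
    using nonempty closed isolated by blast
qed

section \<open>Classification\<close>
locale isolated_corank_one =
  fixes T :: "('a::{finite,field}^'n^'n) set"
  assumes isolated: "isolated_subsemigroup T"
    and corank_one: "\<And>A. A \<in> T \<Longrightarrow> vec.dim (mat_image A) = CARD('n) - 1"
begin

lemma dim_mat_kernel: "A \<in> T \<Longrightarrow> vec.dim (mat_kernel A) = 1"
  using dim_mat_kernel_add_dim_mat_image[of A] corank_one[of A] zero_less_card_finite[where 'a='n]
  by linarith

lemma mat_kernel_mult: "A \<in> T \<Longrightarrow> B \<in> T \<Longrightarrow> mat_kernel (A ** B) = mat_kernel B"
  using dim_mat_kernel[of B] dim_mat_kernel[of "A ** B"] isolated_subsemigroup_mult[OF isolated]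
  by (intro vec.subspace_dim_equal[OF subspace_mat_kernel subspace_mat_kernel
        mat_kernel_subset_mult, symmetric]) simp_all

lemma mat_image_mult: "A \<in> T \<Longrightarrow> B \<in> T \<Longrightarrow> mat_image (A ** B) = mat_image A"
  using corank_one[of A] corank_one[of "A ** B"] isolated_subsemigroup_mult[OF isolated]
  by (intro vec.subspace_dim_equal[OF subspace_mat_image subspace_mat_image
        mat_image_mult_subset]) simp_all

lemma mat_kernel_Int_mat_image:
  assumes "A \<in> T" "B \<in> T"
  shows "mat_kernel A \<inter> mat_image B = {0}"
proof -
  have "v = 0" if "v \<in> mat_kernel A" "v \<in> mat_image B" for v
  proof -
    obtain x where x: "v = B *v x"
      using \<open>v \<in> mat_image B\<close> by (auto simp: mat_image_def)
    then have "x \<in> mat_kernel (A ** B)"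
      using \<open>v \<in> mat_kernel A\<close> by (simp add: mat_kernel_def)
    then have "x \<in> mat_kernel B"
      using mat_kernel_mult[OF assms] by simp
    then show "v = 0"
      using x by (simp add: mat_kernel_def)
  qed
  then show ?thesis
    using subspace_mat_kernel subspace_mat_image vec.subspace_0 by blast
qed

lemma admissible: "admissible_families (mat_image ` T) (mat_kernel ` T)"
proof -
  have "\<not> mat_kernel A \<subseteq> mat_image B" if "A \<in> T" "B \<in> T" for A B
  proof
    assume "mat_kernel A \<subseteq> mat_image B"
    then have "mat_kernel A \<subseteq> {0}"
      using mat_kernel_Int_mat_image[OF that] by blast
    then have "vec.dim (mat_kernel A) = 0"
      by simp
    then show False
      using dim_mat_kernel[OF that(1)] by simp
  qed
  moreover have "T \<noteq> {}"
    using isolated by (simp add: isolated_subsemigroup_def subsemigroup_mat_def)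
  ultimately show ?thesis
    unfolding admissible_families_def
    using corank_one dim_mat_kernel subspace_mat_image subspace_mat_kernel by auto
qed

lemma eq_S_sets: "T = S_sets (mat_image ` T) (mat_kernel ` T)"
proof
  show "S_sets (mat_image ` T) (mat_kernel ` T) \<subseteq> T"
  proof
    fix X assume "X \<in> S_sets (mat_image ` T) (mat_kernel ` T)"
    then obtain A B where AB: "A \<in> T" "B \<in> T" "mat_image X = mat_image A" "mat_kernel X = mat_kernel B"
      by (auto simp: S_sets_def)
    have "mat_kernel X \<inter> mat_image X = {0}"
      using mat_kernel_Int_mat_image[OF AB(2,1)] AB(3,4) by simp
    moreover have "mat_kernel X = mat_kernel (A ** B)" "mat_image X = mat_image (A ** B)"
      using AB mat_kernel_mult mat_image_mult by simp_all
    ultimately obtain j k where "0 < j" "0 < k" "mpow X j = mpow (A ** B) k"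
      by (rule idempotent_mpow_eq)
    then show "X \<in> T"
      using isolated_subsemigroup_mpow_iff[OF isolated] isolated_subsemigroup_mult[OF isolated AB(1,2)]
      by metis
  qed
qed (auto simp: S_sets_def)

end

lemma isolated_subsemigroup_cases:
  fixes T :: "('a::{finite,field}^'n^'n) set"
  assumes T: "isolated_subsemigroup T"
  obtains "T = UNIV" | "T = {A. invertible A}" | "T = {A. \<not> invertible A}"
    | "\<And>A. A \<in> T \<Longrightarrow> vec.dim (mat_image A) = CARD('n) - 1"
proof (cases "mat 1 \<in> T")
  case True
  have "A \<in> T" if "invertible A" for A
    using invertible_mem_of_one_mem[OF T True that] .
  moreover have "A \<in> T" if "B \<in> T" "\<not> invertible B" "\<not> invertible A" for A B
    using singular_mem_of_zero_mem[OF T zero_mem_of_singular_mem[OF T that(1,2)] that(3)] True by blast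
  ultimately show thesis
    using that(1,2) by blast
next
  case False
  then have singular: "\<not> invertible A" if "A \<in> T" for A
    using one_mem_of_invertible_mem[OF T that] by blast
  show thesis
  proof (cases "\<exists>B\<in>T. vec.dim (mat_image B) + 2 \<le> CARD('n)")
    case True
    then have "A \<in> T" if "\<not> invertible A" for A
      using singular_mem_of_zero_mem[OF T zero_mem_of_singular_mem[OF T] that] singular by blast
    then show thesis
      using that(3) singular by blast
  next
    case False
    have "vec.dim (mat_image A) = CARD('n) - 1" if "A \<in> T" for A
      using False that singular[OF that] invertible_iff_dim_mat_image dim_subset_UNIV_cart_gen[of "mat_image A"]
      by fastforce
    then show thesis
      using that(4) by blast
  qed
qed

theorem theorem28:
  fixes T :: "('a::{finite,field}^'n^'n) set"
  assumes "CARD('n) \<ge> 2"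
  shows "isolated_subsemigroup T \<longleftrightarrow>
    (T = UNIV \<or>
     T = {A. invertible A} \<or>
     T = {A. rank A \<le> CARD('n) - 1} \<or>
     (\<exists>\<A> \<B>. \<A> \<noteq> {} \<and> \<B> \<noteq> {} \<and>
        (\<forall>V\<in>\<A>. vec.subspace V \<and> vec.dim V = CARD('n) - 1) \<and>
        (\<forall>V\<in>\<B>. vec.subspace V \<and> vec.dim V = 1) \<and>
        (\<forall>V1\<in>\<B>. \<forall>V2\<in>\<A>. \<not> V1 \<subseteq> V2) \<and>
        T = S_sets \<A> \<B>))"
proof -
  have singular: "{A. rank A \<le> CARD('n) - 1} = {A :: 'a^'n^'n. \<not> invertible A}"
    using rank_le_card_minus_one_iff by blast
  have "isolated_subsemigroup T \<longleftrightarrow> T = UNIV \<or> T = {A. invertible A} \<or> T = {A. \<not> invertible A} \<or>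
    (\<exists>\<A> \<B>. admissible_families \<A> \<B> \<and> T = S_sets \<A> \<B>)"
  proof
    assume T: "isolated_subsemigroup T"
    then show "T = UNIV \<or> T = {A. invertible A} \<or> T = {A. \<not> invertible A} \<or>
      (\<exists>\<A> \<B>. admissible_families \<A> \<B> \<and> T = S_sets \<A> \<B>)"
      by (cases rule: isolated_subsemigroup_cases)
        (use isolated_corank_one.admissible isolated_corank_one.eq_S_sets isolated_corank_one.intro[OF T]
          in blast)+
  qed (use isolated_subsemigroup_UNIV isolated_subsemigroup_invertible isolated_subsemigroup_singular
      isolated_subsemigroup_S_sets in blast)
  then show ?thesis
    unfolding singular admissible_families_def by (simp only: conj_assoc)
qed

end
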